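(* For each $r\in\mathbb{N}$ there is $\alpha>0$ such that the following holds: if $k\le r^2$, $F\subset M_r$ is a $k$-dimensional $C^*$-subalgebra with a set of matrix units $\{e_1,\dots,e_k\}$, and $q\in F$ is a projection, then $q\in\mathcal{Z}(F)$ or $\|[e_m,q]\|\ge\alpha$ for some $m\in\{1,\dots,k\}$.
   Context: If $F\cong M_{r_1}\oplus\dots\oplus M_{r_s}$, a set $\{e_1,\dots,e_k\}\subset F$ is a set of matrix units for $F$ if $k=\sum_i r_i^2$ and $\{e_1,\dots,e_k\}=\{f_i^{(l,m)}: i=1,\dots,s;\ 1\le l,m\le r_i\}$, where for each $i$, $\{f_i^{(l,m)}\}_{l,m}$ is a system of matrix units for the summand $M_{r_i}$. $\mathcal{Z}(F)$ is the center of $F$. *)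

theory Defs
  imports "HOL-Analysis.Analysis"
begin

text \<open>Matrices in M_r are modelled as complex^'n^'n, where CARD('n) = r.\<close>

type_synonym 'n cmat = "complex ^ 'n ^ 'n"

definition cscale :: "complex \<Rightarrow> ('n::finite) cmat \<Rightarrow> 'n cmat" where
  "cscale c A = (\<chi> i j. c * A $ i $ j)"

definition adj :: "('n::finite) cmat \<Rightarrow> 'n cmat" where
  "adj A = (\<chi> i j. cnj (A $ j $ i))"

definition opnorm :: "('n::finite) cmat \<Rightarrow> real" where
  "opnorm A = onorm (\<lambda>v. A *v v)"

definition commutator :: "('n::finite) cmat \<Rightarrow> 'n cmat \<Rightarrow> 'n cmat" where
  "commutator a b = a ** b - b ** a"

text \<open>A (finite-dimensional, hence automatically norm-closed) C*-subalgebra of M_r: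
  a complex linear subspace closed under multiplication and adjoint.\<close>
definition cstar_subalg :: "('n::finite) cmat set \<Rightarrow> bool" where
  "cstar_subalg F \<longleftrightarrow> 0 \<in> F \<and> (\<forall>x\<in>F. \<forall>y\<in>F. x + y \<in> F) \<and>
     (\<forall>c. \<forall>x\<in>F. cscale c x \<in> F) \<and> (\<forall>x\<in>F. \<forall>y\<in>F. x ** y \<in> F) \<and>
     (\<forall>x\<in>F. adj x \<in> F)"

definition cdim :: "('n::finite) cmat set \<Rightarrow> nat" where
  "cdim F = vector_space.dim cscale F"

definition is_projection :: "('n::finite) cmat \<Rightarrow> bool" where
  "is_projection q \<longleftrightarrow> adj q = q \<and> q ** q = q"

definition center :: "('n::finite) cmat set \<Rightarrow> 'n cmat set" where
  "center F = {z \<in> F. \<forall>x\<in>F. z ** x = x ** z}"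

text \<open>f is a family of matrix units for F with respect to a decomposition
  F = M_{rs 0} + ... + M_{rs (s-1)}: for each block i < s, the f i l m (l, m < rs i)
  form a system of matrix units for the i-th summand (nonzero, f(l,m) f(l',m') =
  delta_{m l'} f(l,m'), f(l,m)^* = f(m,l)), distinct summands are orthogonal,
  and together they span F (so the summands exhaust F).\<close>
definition matrix_unit_family ::
  "('n::finite) cmat set \<Rightarrow> nat \<Rightarrow> (nat \<Rightarrow> nat) \<Rightarrow> (nat \<Rightarrow> nat \<Rightarrow> nat \<Rightarrow> ('n::finite) cmat) \<Rightarrow> bool" where
  "matrix_unit_family F s rs f \<longleftrightarrow>
     (\<forall>i<s. rs i > 0) \<and>
     (\<forall>i<s. \<forall>l<rs i. \<forall>m<rs i. f i l m \<in> F \<and> f i l m \<noteq> 0 \<and> adj (f i l m) = f i m l) \<and>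
     (\<forall>i<s. \<forall>l<rs i. \<forall>m<rs i. \<forall>j<s. \<forall>l'<rs j. \<forall>m'<rs j.
        f i l m ** f j l' m' = (if i = j \<and> m = l' then f i l m' else 0)) \<and>
     F = module.span cscale {f i l m | i l m. i < s \<and> l < rs i \<and> m < rs i}"

definition matrix_units :: "('n::finite) cmat set \<Rightarrow> nat \<Rightarrow> (nat \<Rightarrow> ('n::finite) cmat) \<Rightarrow> bool" where
  "matrix_units F k e \<longleftrightarrow>
     (\<exists>s rs f. matrix_unit_family F s rs f \<and> k = (\<Sum>i<s. (rs i)\<^sup>2) \<and>
        e ` {1..k} = {f i l m | i l m. i < s \<and> l < rs i \<and> m < rs i})"

end

theory Submission
  imports Defs
begin

text \<open>
  For x in F and a block i of size r = rs i, each compression f i a a x f i b b is a multiple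
  c(a,b) f i a b, and for a projection q the coefficients c form a Hermitian idempotent
  r x r matrix; if q is not central, one of these matrices is not scalar. A Hermitian
  idempotent matrix whose off-diagonal entries and diagonal differences are all below 1/(4r)
  is scalar: otherwise it and its complement are nonzero idempotents, each with a diagonal
  entry of modulus at least 1/r, which yields a diagonal entry d far from both 0 and 1,
  whereas d - d^2 is the squared off-diagonal mass of its row, below 1/(16r).
  Off-diagonal coefficients and diagonal differences are the coefficients of the compressions
  f i a a [f i a a, q] f i b b and f i b b [f i b a, q] f i a a. Compressing by projections
  does not increase the operator norm and matrix units have norm 1, so some commutator has
  norm at least 1/(4r), and r \<le> n.
\<close>

lemma module_cscale: "module (cscale :: complex \<Rightarrow> ('n::finite) cmat \<Rightarrow> 'n cmat)"
  by unfold_locales (auto simp: cscale_def vec_eq_iff algebra_simps)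

lemma cscale_zero [simp]: "cscale c 0 = 0" "cscale 0 A = 0"
  by (auto simp: cscale_def vec_eq_iff)

lemma cscale_one [simp]: "cscale 1 A = A"
  by (simp add: cscale_def vec_eq_iff)

lemma cscale_cscale: "cscale a (cscale b A) = cscale (a * b) A"
  by (simp add: cscale_def vec_eq_iff mult.assoc)

lemma cscale_add_left: "cscale (a + b) A = cscale a A + cscale b A"
  by (simp add: cscale_def vec_eq_iff algebra_simps)

lemma cscale_diff_left: "cscale (a - b) A = cscale a A - cscale b A"
  by (simp add: cscale_def vec_eq_iff algebra_simps)

lemma cscale_sum_left: "cscale (\<Sum>k\<in>K. g k) A = (\<Sum>k\<in>K. cscale (g k) A)"
  by (induction K rule: infinite_finite_induct) (auto simp: cscale_add_left)

lemma cscale_cancel_right: "A \<noteq> 0 \<Longrightarrow> cscale a A = cscale b A \<Longrightarrow> a = b"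
  by (auto simp: cscale_def vec_eq_iff)

lemma cscale_mult_left: "cscale c A ** B = cscale c (A ** B)"
  by (simp add: cscale_def matrix_matrix_mult_def vec_eq_iff sum_distrib_left mult.assoc)

lemma cscale_mult_right: "A ** cscale c B = cscale c (A ** B)"
  by (simp add: cscale_def matrix_matrix_mult_def vec_eq_iff sum_distrib_left mult.left_commute)

lemma matrix_add_rdistrib: "(B + C) ** A = B ** A + C ** (A::'a::semiring_1^'p^'n)"
  by (simp add: matrix_matrix_mult_def vec_eq_iff sum.distrib distrib_right)

lemma matrix_diff_ldistrib: "A ** (B - C) = A ** B - A ** (C::'a::ring_1^'p^'n)"
  by (simp add: matrix_matrix_mult_def vec_eq_iff sum_subtractf right_diff_distrib)

lemma matrix_diff_rdistrib: "(B - C) ** A = B ** A - C ** (A::'a::ring_1^'p^'n)"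
  by (simp add: matrix_matrix_mult_def vec_eq_iff sum_subtractf left_diff_distrib)

lemma matrix_sum_rdistrib: "(\<Sum>k\<in>K. g k) ** A = (\<Sum>k\<in>K. g k ** (A::'a::semiring_1^'p^'n))"
  by (induction K rule: infinite_finite_induct) (auto simp: matrix_add_rdistrib)

lemma matrix_sum_ldistrib: "A ** (\<Sum>k\<in>K. g k) = (\<Sum>k\<in>K. A ** (g k::'a::semiring_1^'p^'n))"
  by (induction K rule: infinite_finite_induct) (auto simp: matrix_add_ldistrib)

lemma adj_mult: "adj (A ** B) = adj B ** adj A"
  by (simp add: adj_def matrix_matrix_mult_def vec_eq_iff mult.commute)

lemma adj_cscale: "adj (cscale c A) = cscale (cnj c) (adj A)"
  by (simp add: adj_def cscale_def vec_eq_iff)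

lemma subspace_mult_eq:
  fixes A B C D :: "'n::finite cmat"
  shows "module.subspace cscale {x. A ** x ** B = C ** x ** D}"
  by (auto simp: module.subspace_def[OF module_cscale] matrix_add_ldistrib matrix_add_rdistrib
      cscale_mult_left cscale_mult_right)

lemma subspace_compression_multiple:
  fixes A B E :: "'n::finite cmat"
  shows "module.subspace cscale {x. \<exists>c. A ** x ** B = cscale c E}"
proof -
  have "\<exists>c. A ** (x + y) ** B = cscale c E"
    if "A ** x ** B = cscale c1 E" "A ** y ** B = cscale c2 E" for x y c1 c2
    using that by (auto simp: matrix_add_ldistrib matrix_add_rdistrib cscale_add_left intro: exI[of _ "c1 + c2"])
  moreover have "\<exists>c. A ** cscale d x ** B = cscale c E" if "A ** x ** B = cscale c1 E" for x d c1
    using that by (auto simp: cscale_mult_left cscale_mult_right cscale_cscale)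
  ultimately show ?thesis
    by (auto simp: module.subspace_def[OF module_cscale] intro: exI[of _ 0])
qed

section \<open>Operator norm\<close>

lemma inner_complex_eq_Re: "inner (x::complex) y = Re (x * cnj y)"
  by (simp add: inner_complex_def)

lemma inner_matrix_vector_adj: "inner (A *v v) w = inner v (adj A *v w)"
proof -
  have "inner (A *v v) w = Re (\<Sum>i\<in>UNIV. \<Sum>j\<in>UNIV. A $ i $ j * v $ j * cnj (w $ i))"
    by (simp add: inner_vec_def inner_complex_eq_Re matrix_vector_mult_def sum_distrib_right Re_sum)
  also have "\<dots> = inner v (adj A *v w)"
    by (subst sum.swap) (simp add: inner_vec_def inner_complex_eq_Re matrix_vector_mult_def adj_def
        sum_distrib_left Re_sum mult_ac)
  finally show ?thesis .
qed

lemma opnorm_nonneg: "0 \<le> opnorm A"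
  unfolding opnorm_def by (rule onorm_pos_le) simp

lemma opnorm_mult_le: "opnorm (A ** B) \<le> opnorm A * opnorm B"
proof -
  have "opnorm (A ** B) = onorm ((\<lambda>v. A *v v) \<circ> (\<lambda>v. B *v v))"
    by (simp add: opnorm_def o_def matrix_vector_mul_assoc)
  also have "\<dots> \<le> opnorm A * opnorm B"
    unfolding opnorm_def by (rule onorm_compose) simp_all
  finally show ?thesis .
qed

lemma norm_cscale_mult_vector: "norm (cscale c A *v v) = cmod c * norm (A *v v)"
proof -
  have "cscale c A *v v = (\<chi> i. c * (A *v v) $ i)"
    by (simp add: cscale_def matrix_vector_mult_def vec_eq_iff sum_distrib_left mult.assoc)
  then show ?thesis
    by (simp add: norm_vec_def L2_set_def norm_mult power_mult_distrib sum_distrib_left[symmetric] real_sqrt_mult)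
qed

lemma opnorm_cscale: "opnorm (cscale c A) = cmod c * opnorm A"
proof (cases "c = 0")
  case True
  then have "cscale c A = 0" by (simp add: cscale_def vec_eq_iff)
  then show ?thesis using True by (simp add: opnorm_def onorm_zero)
next
  case False
  show ?thesis
  proof (rule antisym)
    show "opnorm (cscale c A) \<le> cmod c * opnorm A"
      unfolding opnorm_def
      by (rule onorm_le) (simp add: norm_cscale_mult_vector mult.assoc mult_left_mono onorm)
    have "opnorm A \<le> opnorm (cscale c A) / cmod c"
      unfolding opnorm_def[of A]
    proof (intro onorm_le)
      fix v
      have "norm (A *v v) * cmod c \<le> opnorm (cscale c A) * norm v"
        using onorm[of "\<lambda>v. cscale c A *v v" v] norm_cscale_mult_vector[of c A v]
        by (simp add: opnorm_def mult.commute)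
      then show "norm (A *v v) \<le> opnorm (cscale c A) / cmod c * norm v"
        using False by (simp add: pos_le_divide_eq field_simps)
    qed
    then show "cmod c * opnorm A \<le> opnorm (cscale c A)"
      using False by (simp add: pos_le_divide_eq mult.commute)
  qed
qed

lemma norm_projection_mult_vector_le:
  assumes "is_projection P"
  shows "norm (P *v v) \<le> norm v"
proof -
  have "(norm (P *v v))\<^sup>2 = inner v (P *v v)"
    using assms by (simp add: dot_square_norm[symmetric] inner_matrix_vector_adj
        matrix_vector_mul_assoc is_projection_def)
  also have "\<dots> \<le> norm v * norm (P *v v)"
    by (rule norm_cauchy_schwarz)
  finally show ?thesis
    by (cases "P *v v = 0") (auto simp: power2_eq_square)
qed

lemma opnorm_le_1_if_partial_isometry:
  assumes "is_projection (adj A ** A)"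
  shows "opnorm A \<le> 1"
  unfolding opnorm_def
proof (rule onorm_le)
  fix v
  have "(norm (A *v v))\<^sup>2 = inner v ((adj A ** A) *v v)"
    by (simp add: dot_square_norm[symmetric] inner_matrix_vector_adj matrix_vector_mul_assoc)
  also have "\<dots> \<le> norm v * norm ((adj A ** A) *v v)"
    by (rule norm_cauchy_schwarz)
  also have "\<dots> \<le> (norm v)\<^sup>2"
    using norm_projection_mult_vector_le[OF assms] by (simp add: power2_eq_square mult_left_mono)
  finally show "norm (A *v v) \<le> 1 * norm v"
    using power2_le_imp_le by simp
qed

lemma one_le_opnorm_projection:
  assumes P: "is_projection P" and "P \<noteq> 0"
  shows "1 \<le> opnorm P"
proof -
  obtain w where "P *v w \<noteq> 0"
    using \<open>P \<noteq> 0\<close> matrix_eq[of P 0] by auto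
  moreover have "P *v (P *v w) = P *v w"
    using P by (simp add: matrix_vector_mul_assoc is_projection_def)
  ultimately have "norm (P *v w) \<le> opnorm P * norm (P *v w)" "norm (P *v w) > 0"
    using onorm[of "\<lambda>v. P *v v" "P *v w"] by (auto simp: opnorm_def)
  then show ?thesis by simp
qed

section \<open>Hermitian idempotent coefficient matrices\<close>

text \<open>Blocks have varying sizes r, so an r x r matrix is a function on nat of which only the
  entries below r matter.\<close>

definition is_proj_matrix :: "nat \<Rightarrow> (nat \<Rightarrow> nat \<Rightarrow> complex) \<Rightarrow> bool" where
  "is_proj_matrix r C \<longleftrightarrow>
     (\<forall>a<r. \<forall>b<r. C b a = cnj (C a b) \<and> C a b = (\<Sum>k<r. C a k * C k b))"

lemma proj_matrix_adj: "\<lbrakk>is_proj_matrix r C; a < r; b < r\<rbrakk> \<Longrightarrow> C b a = cnj (C a b)"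
  unfolding is_proj_matrix_def by blast

lemma proj_matrix_idem: "\<lbrakk>is_proj_matrix r C; a < r; b < r\<rbrakk> \<Longrightarrow> (\<Sum>k<r. C a k * C k b) = C a b"
  unfolding is_proj_matrix_def by metis

lemma idempotent_matrix_large_entry:
  fixes C :: "nat \<Rightarrow> nat \<Rightarrow> complex"
  assumes idem: "\<And>a b. a < r \<Longrightarrow> b < r \<Longrightarrow> C a b = (\<Sum>k<r. C a k * C k b)"
    and nonzero: "a0 < r" "b0 < r" "C a0 b0 \<noteq> 0"
  shows "\<exists>u<r. \<exists>v<r. 1 / real r \<le> cmod (C u v)"
proof -
  define M where "M = Max ((\<lambda>(u, v). cmod (C u v)) ` ({..<r} \<times> {..<r}))"
  have le_M: "cmod (C a b) \<le> M" if "a < r" "b < r" for a b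
    unfolding M_def using that by (intro Max_ge) auto
  have "M \<in> (\<lambda>(u, v). cmod (C u v)) ` ({..<r} \<times> {..<r})"
    unfolding M_def using nonzero by (intro Max_in) auto
  then obtain u v where uv: "u < r" "v < r" "M = cmod (C u v)"
    by auto
  have "0 < M"
    using le_M[OF nonzero(1,2)] nonzero(3) zero_less_norm_iff[of "C a0 b0"] by linarith
  have "M = cmod (\<Sum>k<r. C u k * C k v)"
    using uv idem[OF uv(1,2)] by simp
  also have "\<dots> \<le> (\<Sum>k<r. cmod (C u k) * cmod (C k v))"
    by (rule order_trans[OF norm_sum]) (simp add: norm_mult)
  also have "\<dots> \<le> (\<Sum>k<r. M * M)"
    using uv le_M by (intro sum_mono mult_mono) auto
  finally have "M * 1 \<le> M * (real r * M)"
    by (simp add: mult_ac)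
  then have "1 \<le> real r * M"
    using \<open>0 < M\<close> by (simp only: mult_le_cancel_left_pos)
  then show ?thesis
    using uv nonzero by (auto simp: divide_le_eq mult.commute)
qed

lemma proj_matrix_diagonal:
  assumes "is_proj_matrix r C" "a < r"
  shows "C a a = of_real (\<Sum>k<r. (cmod (C a k))\<^sup>2)"
proof -
  have "C a a = (\<Sum>k<r. C a k * cnj (C a k))"
    using assms unfolding is_proj_matrix_def by (metis (no_types, lifting) lessThan_iff sum.cong)
  then show ?thesis
    by (simp only: of_real_sum complex_norm_square)
qed

lemma proj_matrix_diagonal_defect:
  assumes "is_proj_matrix r C" "a < r"
  shows "Re (C a a) - (Re (C a a))\<^sup>2 = (\<Sum>k\<in>{..<r} - {a}. (cmod (C a k))\<^sup>2)"
proof -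
  define d where "d = (\<Sum>k<r. (cmod (C a k))\<^sup>2)"
  have diagonal: "C a a = of_real d"
    using proj_matrix_diagonal[OF assms] by (simp add: d_def)
  have "d = (cmod (C a a))\<^sup>2 + (\<Sum>k\<in>{..<r} - {a}. (cmod (C a k))\<^sup>2)"
    unfolding d_def using assms(2) by (simp add: sum.remove)
  then show ?thesis
    using diagonal by simp
qed

lemma proj_matrix_diagonal_defect_le:
  assumes "is_proj_matrix r C" "u < r" and off: "\<And>k. k < r \<Longrightarrow> k \<noteq> u \<Longrightarrow> cmod (C u k) \<le> \<beta>"
  shows "Re (C u u) - (Re (C u u))\<^sup>2 \<le> real r * \<beta>\<^sup>2"
proof -
  have "Re (C u u) - (Re (C u u))\<^sup>2 \<le> (\<Sum>k\<in>{..<r} - {u}. \<beta>\<^sup>2)"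
    unfolding proj_matrix_diagonal_defect[OF assms(1,2)] using off
    by (intro sum_mono power_mono) auto
  also have "\<dots> \<le> real r * \<beta>\<^sup>2"
    using card_Diff1_le[of "{..<r}" u] by (simp add: mult_right_mono)
  finally show ?thesis .
qed

lemma mult_one_minus_lower_bound:
  fixes x r :: real
  assumes "0 < r" "1 / r \<le> x" "3 / (4 * r) \<le> 1 - x"
  shows "3 / (8 * r) \<le> x * (1 - x)"
proof (cases "x \<le> 1 / 2")
  case True
  then have "x * (1 / 2) \<le> x * (1 - x)"
    using assms by (intro mult_left_mono) (auto intro: order_trans[OF _ assms(2)])
  moreover have "3 / (8 * r) \<le> x * (1 / 2)"
    using assms by (simp add: field_simps)
  ultimately show ?thesis by linarith
next
  case False
  have "0 < 3 / (4 * r)"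
    using assms by simp
  then have "0 \<le> 1 - x"
    using assms(3) by linarith
  then have "(1 / 2) * (1 - x) \<le> x * (1 - x)"
    using False by (intro mult_right_mono) auto
  moreover have "3 / (8 * r) \<le> (1 / 2) * (1 - x)"
    using assms by (simp add: field_simps)
  ultimately show ?thesis by linarith
qed

lemma proj_matrix_complement:
  assumes C: "is_proj_matrix r C"
  shows "is_proj_matrix r (\<lambda>a b. (if a = b then 1 else 0) - C a b)"
  unfolding is_proj_matrix_def
proof (intro allI impI conjI)
  fix a b assume ab: "a < r" "b < r"
  show "(if b = a then 1 else 0) - C b a = cnj ((if a = b then 1 else 0) - C a b)"
    using proj_matrix_adj[OF C ab] by simp
  have "(\<Sum>k<r. ((if a = k then 1 else 0) - C a k) * ((if k = b then 1 else 0) - C k b))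
      = (\<Sum>k<r. (if a = k then (if k = b then 1 else 0) - C k b else 0))
        - (\<Sum>k<r. (if k = b then C a k else 0)) + (\<Sum>k<r. C a k * C k b)"
    unfolding sum_subtractf[symmetric] sum.distrib[symmetric]
    by (intro sum.cong) (auto simp: algebra_simps)
  also have "\<dots> = (if a = b then 1 else 0) - C a b"
    using C ab by (simp add: proj_matrix_idem)
  finally show "(if a = b then 1 else 0) - C a b =
      (\<Sum>k<r. ((if a = k then 1 else 0) - C a k) * ((if k = b then 1 else 0) - C k b))" ..
qed

lemma proj_matrix_large_diagonal:
  assumes C: "is_proj_matrix r C"
    and off: "\<And>a b. a < r \<Longrightarrow> b < r \<Longrightarrow> a \<noteq> b \<Longrightarrow> cmod (C a b) < 1 / real r"
    and nonzero: "a0 < r" "b0 < r" "C a0 b0 \<noteq> 0"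
  shows "\<exists>u<r. 1 / real r \<le> Re (C u u)"
proof -
  obtain u v where uv: "u < r" "v < r" "1 / real r \<le> cmod (C u v)"
    using idempotent_matrix_large_entry[of r C, OF _ nonzero] proj_matrix_idem[OF C] by auto
  then have "u = v"
    using off not_le by blast
  moreover have "cmod (C u u) = Re (C u u)"
  proof -
    define d where "d = (\<Sum>k<r. (cmod (C u k))\<^sup>2)"
    have "C u u = of_real d"
      unfolding d_def by (rule proj_matrix_diagonal[OF C uv(1)])
    moreover have "0 \<le> d"
      unfolding d_def by (simp add: sum_nonneg)
    ultimately show ?thesis
      by simp
  qed
  ultimately show ?thesis
    using uv by auto
qed

lemma proj_matrix_diagonal_away_from_0_1:
  assumes C: "is_proj_matrix r C"
    and off: "\<And>a b. a < r \<Longrightarrow> b < r \<Longrightarrow> a \<noteq> b \<Longrightarrow> cmod (C a b) < 1 / real r"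
    and nonzero: "\<exists>a<r. \<exists>b<r. C a b \<noteq> 0"
    and not_one: "\<exists>a<r. \<exists>b<r. C a b \<noteq> (if a = b then 1 else 0)"
  shows "\<exists>u<r. 1 / real r \<le> Re (C u u)" and "\<exists>w<r. 1 / real r \<le> 1 - Re (C w w)"
proof -
  show "\<exists>u<r. 1 / real r \<le> Re (C u u)"
    using nonzero proj_matrix_large_diagonal[OF C off] by blast
  define D where "D = (\<lambda>a b. (if a = b then 1 else 0) - C a b)"
  have "is_proj_matrix r D"
    unfolding D_def by (rule proj_matrix_complement[OF C])
  moreover have "cmod (D a b) < 1 / real r" if "a < r" "b < r" "a \<noteq> b" for a b
    using off[OF that] that by (simp add: D_def)
  moreover have "\<exists>a<r. \<exists>b<r. D a b \<noteq> 0"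
  proof -
    obtain a b where "a < r" "b < r" "C a b \<noteq> (if a = b then 1 else 0)"
      using not_one by blast
    then have "D a b \<noteq> 0"
      by (simp add: D_def)
    then show ?thesis
      using \<open>a < r\<close> \<open>b < r\<close> by blast
  qed
  ultimately have "\<exists>w<r. 1 / real r \<le> Re (D w w)"
    using proj_matrix_large_diagonal by blast
  then show "\<exists>w<r. 1 / real r \<le> 1 - Re (C w w)"
    by (simp add: D_def)
qed

lemma proj_matrix_scalar_if_nearly_diagonal:
  assumes C: "is_proj_matrix r C"
    and off: "\<And>a b. a < r \<Longrightarrow> b < r \<Longrightarrow> a \<noteq> b \<Longrightarrow> cmod (C a b) < 1 / (4 * real r)"
    and diag: "\<And>a b. a < r \<Longrightarrow> b < r \<Longrightarrow> cmod (C a a - C b b) < 1 / (4 * real r)"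
  shows "\<exists>c. \<forall>a<r. \<forall>b<r. C a b = (if a = b then c else 0)"
proof (rule ccontr)
  assume not_scalar: "\<not> ?thesis"
  define \<beta> :: real where "\<beta> = 1 / (4 * real r)"
  have "r > 0"
    using not_scalar by (rule contrapos_np) simp
  have off_C: "cmod (C a b) < 1 / real r" if "a < r" "b < r" "a \<noteq> b" for a b
    using off[OF that] \<open>r > 0\<close> by (simp add: field_simps)
  have not_c: "\<exists>a<r. \<exists>b<r. C a b \<noteq> (if a = b then c else 0)" for c
    using not_scalar by blast
  have "\<exists>a<r. \<exists>b<r. C a b \<noteq> 0"
    using not_c[of 0] by simp
  then obtain u w where u: "u < r" "1 / real r \<le> Re (C u u)"
    and w: "w < r" "1 / real r \<le> 1 - Re (C w w)"
    using proj_matrix_diagonal_away_from_0_1[OF C off_C _ not_c[of 1]] by blast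
  \<comment> \<open>x is at least 1/r away from 0 and 3/(4r) away from 1, but x - x^2 is the
    off-diagonal mass of row u.\<close>
  define x where "x = Re (C u u)"
  have "x - Re (C w w) < \<beta>"
    using diag[OF u(1) w(1)] abs_Re_le_cmod[of "C u u - C w w"] by (simp add: x_def \<beta>_def)
  then have x_upper: "3 / (4 * real r) \<le> 1 - x"
    using w(2) \<open>r > 0\<close> by (simp add: \<beta>_def field_simps)
  have x_lower: "1 / real r \<le> x"
    using u(2) by (simp add: x_def)
  have "x * (1 - x) = x - x\<^sup>2"
    by (simp add: algebra_simps power2_eq_square)
  also have "\<dots> \<le> real r * \<beta>\<^sup>2"
    unfolding x_def using off[OF u(1)]
    by (intro proj_matrix_diagonal_defect_le[OF C u(1)]) (auto simp: \<beta>_def less_imp_le)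
  also have "\<dots> = 1 / (16 * real r)"
    by (simp add: \<beta>_def power2_eq_square)
  finally have "x * (1 - x) \<le> 1 / (16 * real r)" .
  moreover have "3 / (8 * real r) \<le> x * (1 - x)"
    using mult_one_minus_lower_bound[OF _ x_lower x_upper] \<open>r > 0\<close> by simp
  ultimately show False
    using \<open>r > 0\<close> by (simp add: field_simps)
qed

section \<open>Matrix units\<close>

locale matrix_unit_system =
  fixes F :: "('n::finite) cmat set" and s :: nat and rs :: "nat \<Rightarrow> nat"
    and f :: "nat \<Rightarrow> nat \<Rightarrow> nat \<Rightarrow> 'n cmat"
  assumes family: "matrix_unit_family F s rs f"
begin

lemma unit_mult:
  "\<lbrakk>i < s; l < rs i; m < rs i; j < s; l' < rs j; m' < rs j\<rbrakk> \<Longrightarrow>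
    f i l m ** f j l' m' = (if i = j \<and> m = l' then f i l m' else 0)"
  using family by (simp add: matrix_unit_family_def)

lemma unit_nonzero: "\<lbrakk>i < s; l < rs i; m < rs i\<rbrakk> \<Longrightarrow> f i l m \<noteq> 0"
  using family by (simp add: matrix_unit_family_def)

lemma unit_adj: "\<lbrakk>i < s; l < rs i; m < rs i\<rbrakk> \<Longrightarrow> adj (f i l m) = f i m l"
  using family by (simp add: matrix_unit_family_def)

lemma units_span_induct:
  assumes "x \<in> F" and "module.subspace cscale S"
    and "\<And>i l m. \<lbrakk>i < s; l < rs i; m < rs i\<rbrakk> \<Longrightarrow> f i l m \<in> S"
  shows "x \<in> S"
proof -
  interpret module cscale by (rule module_cscale)
  have "x \<in> span {f i l m | i l m. i < s \<and> l < rs i \<and> m < rs i}"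
    using assms(1) family by (simp add: matrix_unit_family_def)
  from this assms(2) show ?thesis
    by (rule span_subspace_induct) (use assms(3) in blast)
qed

lemma diagonal_unit_projection: "\<lbrakk>i < s; a < rs i\<rbrakk> \<Longrightarrow> is_projection (f i a a)"
  by (simp add: is_projection_def unit_adj unit_mult)

lemma opnorm_unit_le_1: "\<lbrakk>i < s; a < rs i; b < rs i\<rbrakk> \<Longrightarrow> opnorm (f i a b) \<le> 1"
  by (rule opnorm_le_1_if_partial_isometry) (simp add: unit_adj unit_mult diagonal_unit_projection)

lemma one_le_opnorm_unit:
  assumes "i < s" "a < rs i" "b < rs i"
  shows "1 \<le> opnorm (f i a b)"
proof -
  have "1 \<le> opnorm (f i a a)"
    using assms by (simp add: one_le_opnorm_projection diagonal_unit_projection unit_nonzero)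
  also have "\<dots> = opnorm (f i a b ** f i b a)"
    using assms by (simp add: unit_mult)
  also have "\<dots> \<le> opnorm (f i a b) * opnorm (f i b a)"
    by (rule opnorm_mult_le)
  also have "\<dots> \<le> opnorm (f i a b)"
    using assms by (intro mult_left_le opnorm_unit_le_1 opnorm_nonneg)
  finally show ?thesis .
qed

lemma compression_scalar_le_opnorm:
  assumes "i < s" "a < rs i" "b < rs i" and "f i a a ** X ** f i b b = cscale c (f i a b)"
  shows "cmod c \<le> opnorm X"
proof -
  have "cmod c \<le> cmod c * opnorm (f i a b)"
    using one_le_opnorm_unit[OF assms(1-3)] by (simp add: mult_le_cancel_left1)
  also have "\<dots> = opnorm (f i a a ** X ** f i b b)"
    using assms(4) by (simp add: opnorm_cscale)
  also have "\<dots> \<le> opnorm (f i a a ** X) * opnorm (f i b b)"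
    by (rule opnorm_mult_le)
  also have "\<dots> \<le> opnorm (f i a a ** X)"
    using assms by (intro mult_left_le opnorm_unit_le_1 opnorm_nonneg)
  also have "\<dots> \<le> opnorm (f i a a) * opnorm X"
    by (rule opnorm_mult_le)
  also have "\<dots> \<le> opnorm X"
    using assms by (intro mult_left_le_one_le opnorm_unit_le_1 opnorm_nonneg)
  finally show ?thesis .
qed

definition block_unit :: "nat \<Rightarrow> 'n cmat" where
  "block_unit i = (\<Sum>k<rs i. f i k k)"

lemma unit_mult_block_unit:
  assumes "i < s" "l < rs i" "m < rs i"
  shows "f i l m ** block_unit i = f i l m"
proof -
  have "f i l m ** block_unit i = (\<Sum>k<rs i. if m = k then f i l k else 0)"
    unfolding block_unit_def matrix_sum_ldistrib using assms by (intro sum.cong) (auto simp: unit_mult)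
  also have "\<dots> = f i l m"
    using assms by simp
  finally show ?thesis .
qed

lemma block_unit_mult_unit:
  assumes "i < s" "l < rs i" "m < rs i"
  shows "block_unit i ** f i l m = f i l m"
proof -
  have "block_unit i ** f i l m = (\<Sum>k<rs i. if k = l then f i k m else 0)"
    unfolding block_unit_def matrix_sum_rdistrib using assms by (intro sum.cong) (auto simp: unit_mult)
  also have "\<dots> = f i l m"
    using assms by simp
  finally show ?thesis .
qed

lemma compression_multiple_of_unit:
  assumes "x \<in> F" "i < s" "a < rs i" "b < rs i"
  shows "\<exists>c. f i a a ** x ** f i b b = cscale c (f i a b)"
proof -
  have "\<exists>c. f i a a ** f j l m ** f i b b = cscale c (f i a b)"
    if "j < s" "l < rs j" "m < rs j" for j l m
  proof (cases "j = i \<and> l = a \<and> m = b")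
    case True
    then show ?thesis using assms by (intro exI[of _ 1]) (simp add: unit_mult)
  next
    case False
    then show ?thesis using that assms by (intro exI[of _ 0]) (auto simp: unit_mult)
  qed
  then show ?thesis
    using units_span_induct[OF assms(1) subspace_compression_multiple] by auto
qed

lemma mult_block_unit_right:
  assumes "x \<in> F" "i < s" "a < rs i"
  shows "f i a a ** x ** block_unit i = f i a a ** x"
proof -
  have "f i a a ** f j l m ** block_unit i = f i a a ** f j l m"
    if "j < s" "l < rs j" "m < rs j" for j l m
    using that assms by (simp add: unit_mult unit_mult_block_unit)
  then show ?thesis
    using units_span_induct[OF assms(1) subspace_mult_eq[of "f i a a" "block_unit i" "f i a a" "mat 1"]]
    by simp
qed

lemma block_unit_mult_left:
  assumes "x \<in> F" "i < s" "b < rs i"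
  shows "block_unit i ** x ** f i b b = x ** f i b b"
proof -
  have "block_unit i ** f j l m ** f i b b = f j l m ** f i b b"
    if "j < s" "l < rs j" "m < rs j" for j l m
    using that assms by (auto simp: unit_mult block_unit_mult_unit matrix_mul_assoc[symmetric])
  then show ?thesis
    using units_span_induct[OF assms(1) subspace_mult_eq[of "block_unit i" "f i b b" "mat 1" "f i b b"]]
    by simp
qed

text \<open>Entry (a, b) of the i-th block of x, read off from the compression
  f i a a ** x ** f i b b.\<close>

definition coef :: "'n cmat \<Rightarrow> nat \<Rightarrow> nat \<Rightarrow> nat \<Rightarrow> complex" where
  "coef x i a b = (SOME c. f i a a ** x ** f i b b = cscale c (f i a b))"

lemma compression_eq_coef:
  "\<lbrakk>x \<in> F; i < s; a < rs i; b < rs i\<rbrakk> \<Longrightarrow> f i a a ** x ** f i b b = cscale (coef x i a b) (f i a b)"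
  unfolding coef_def by (rule someI_ex) (rule compression_multiple_of_unit)

lemma coef_eqI:
  assumes "x \<in> F" "i < s" "a < rs i" "b < rs i" and "f i a a ** x ** f i b b = cscale c (f i a b)"
  shows "coef x i a b = c"
  using assms compression_eq_coef[OF assms(1-4)] unit_nonzero[OF assms(2-4)]
  by (metis cscale_cancel_right)

lemma coef_adj:
  assumes q: "q \<in> F" "adj q = q" and "i < s" "a < rs i" "b < rs i"
  shows "coef q i b a = cnj (coef q i a b)"
proof (rule coef_eqI[OF q(1)])
  have "f i b b ** q ** f i a a = adj (f i a a ** q ** f i b b)"
    using assms by (simp add: adj_mult unit_adj matrix_mul_assoc)
  also have "\<dots> = cscale (cnj (coef q i a b)) (f i b a)"
    using assms by (simp add: compression_eq_coef adj_cscale unit_adj)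
  finally show "f i b b ** q ** f i a a = cscale (cnj (coef q i a b)) (f i b a)" .
qed (use assms in auto)

lemma coef_idem:
  assumes q: "q \<in> F" "q ** q = q" and i: "i < s" "a < rs i" "b < rs i"
  shows "coef q i a b = (\<Sum>k<rs i. coef q i a k * coef q i k b)"
proof (rule coef_eqI[OF q(1) i])
  have "f i a a ** q ** f i b b = f i a a ** q ** q ** f i b b"
    using q(2) by (simp flip: matrix_mul_assoc)
  also have "\<dots> = f i a a ** q ** block_unit i ** q ** f i b b"
    using q i by (simp add: mult_block_unit_right)
  also have "\<dots> = (\<Sum>k<rs i. (f i a a ** q ** f i k k) ** (f i k k ** q ** f i b b))"
  proof -
    have "f i a a ** q ** f i k k ** q ** f i b b = (f i a a ** q ** f i k k) ** (f i k k ** q ** f i b b)"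
      if "k < rs i" for k
    proof -
      have "f i k k ** f i k k = f i k k"
        using that i by (simp add: unit_mult)
      then show ?thesis by (metis matrix_mul_assoc)
    qed
    then show ?thesis
      by (simp add: block_unit_def matrix_sum_ldistrib matrix_sum_rdistrib)
  qed
  also have "\<dots> = (\<Sum>k<rs i. cscale (coef q i a k * coef q i k b) (f i a b))"
    using q i by (intro sum.cong) (simp_all add: compression_eq_coef cscale_mult_left cscale_mult_right
        cscale_cscale unit_mult mult.commute)
  also have "\<dots> = cscale (\<Sum>k<rs i. coef q i a k * coef q i k b) (f i a b)"
    by (simp add: cscale_sum_left)
  finally show "f i a a ** q ** f i b b = cscale (\<Sum>k<rs i. coef q i a k * coef q i k b) (f i a b)" .
qed

lemma mult_diagonal_unit_eq_column_sum:
  assumes "x \<in> F" "i < s" "b < rs i"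
  shows "x ** f i b b = (\<Sum>k<rs i. cscale (coef x i k b) (f i k b))"
proof -
  have "x ** f i b b = (\<Sum>k<rs i. f i k k ** x ** f i b b)"
    using block_unit_mult_left[OF assms] by (simp add: block_unit_def matrix_sum_rdistrib)
  then show ?thesis
    using assms by (simp add: compression_eq_coef)
qed

lemma diagonal_unit_mult_eq_row_sum:
  assumes "x \<in> F" "i < s" "a < rs i"
  shows "f i a a ** x = (\<Sum>k<rs i. cscale (coef x i a k) (f i a k))"
proof -
  have "f i a a ** x = (\<Sum>k<rs i. f i a a ** x ** f i k k)"
    using mult_block_unit_right[OF assms] by (simp add: block_unit_def matrix_sum_ldistrib)
  then show ?thesis
    using assms by (simp add: compression_eq_coef)
qed

lemma central_if_coef_scalar:
  assumes q: "q \<in> F"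
    and scalar: "\<And>i. i < s \<Longrightarrow> \<exists>c. \<forall>a<rs i. \<forall>b<rs i. coef q i a b = (if a = b then c else 0)"
  shows "q \<in> center F"
proof -
  have "q ** f i l m = f i l m ** q" if i: "i < s" "l < rs i" "m < rs i" for i l m
  proof -
    obtain c where c: "\<forall>a<rs i. \<forall>b<rs i. coef q i a b = (if a = b then c else 0)"
      using scalar i(1) by blast
    have "q ** f i l l = (\<Sum>k<rs i. if k = l then cscale c (f i l l) else 0)"
      unfolding mult_diagonal_unit_eq_column_sum[OF q i(1,2)] using i c by (intro sum.cong) auto
    then have left: "q ** f i l l = cscale c (f i l l)"
      using i by simp
    have "f i m m ** q = (\<Sum>k<rs i. if k = m then cscale c (f i m m) else 0)"
      unfolding diagonal_unit_mult_eq_row_sum[OF q i(1,3)] using i c by (intro sum.cong) auto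
    then have right: "f i m m ** q = cscale c (f i m m)"
      using i by simp
    have "q ** f i l m = q ** (f i l l ** f i l m)"
      using i by (simp add: unit_mult)
    also have "\<dots> = cscale c (f i l m)"
      using i by (simp only: matrix_mul_assoc left cscale_mult_left) (simp add: unit_mult)
    also have "\<dots> = f i l m ** (f i m m ** q)"
      using i by (simp only: right cscale_mult_right) (simp add: unit_mult)
    also have "\<dots> = f i l m ** q"
      using i by (simp add: matrix_mul_assoc unit_mult)
    finally show ?thesis .
  qed
  then have "x \<in> {x. q ** x ** mat 1 = mat 1 ** x ** q}" if "x \<in> F" for x
    using units_span_induct[OF that subspace_mult_eq[of q "mat 1" "mat 1" q]] by simp
  then show ?thesis
    using q by (simp add: center_def)
qed

lemma coef_proj_matrix:
  assumes "q \<in> F" "is_projection q" "i < s"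
  shows "is_proj_matrix (rs i) (coef q i)"
  using assms coef_adj coef_idem unfolding is_proj_matrix_def is_projection_def by blast

lemma compression_commutator_diagonal_unit:
  assumes "x \<in> F" "i < s" "a < rs i" "b < rs i" "a \<noteq> b"
  shows "f i a a ** commutator (f i a a) x ** f i b b = cscale (coef x i a b) (f i a b)"
proof -
  have "f i a a ** commutator (f i a a) x ** f i b b
      = (f i a a ** f i a a) ** x ** f i b b - f i a a ** x ** (f i a a ** f i b b)"
    by (simp add: commutator_def matrix_diff_ldistrib matrix_diff_rdistrib matrix_mul_assoc)
  also have "\<dots> = f i a a ** x ** f i b b"
    using assms by (simp add: unit_mult)
  finally show ?thesis
    using assms by (simp add: compression_eq_coef)
qed

lemma compression_commutator_unit:
  assumes "x \<in> F" "i < s" "l < rs i" "m < rs i"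
  shows "f i l l ** commutator (f i l m) x ** f i m m = cscale (coef x i m m - coef x i l l) (f i l m)"
proof -
  have left: "f i l l ** f i l m = f i l m" and right: "f i l m ** f i m m = f i l m"
    using assms by (simp_all add: unit_mult)
  have absorb: "f i l m ** (f i m m ** X) = f i l m ** X" for X
    by (simp add: matrix_mul_assoc right)
  have "f i l l ** commutator (f i l m) x ** f i m m
      = f i l l ** f i l m ** x ** f i m m - f i l l ** x ** f i l m ** f i m m"
    by (simp add: commutator_def matrix_diff_ldistrib matrix_diff_rdistrib matrix_mul_assoc)
  also have "\<dots> = f i l m ** (f i m m ** x ** f i m m) - (f i l l ** x ** f i l l) ** f i l m"
    by (simp add: left right absorb flip: matrix_mul_assoc)
  also have "\<dots> = cscale (coef x i m m - coef x i l l) (f i l m)"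
    using assms by (simp add: compression_eq_coef cscale_mult_left cscale_mult_right cscale_diff_left
        left right)
  finally show ?thesis .
qed

lemma noncentral_projection_commutator_bound:
  assumes q: "q \<in> F" "is_projection q" and "q \<notin> center F"
  shows "\<exists>i<s. \<exists>l<rs i. \<exists>m<rs i. 1 / (4 * real (rs i)) \<le> opnorm (commutator (f i l m) q)"
proof -
  obtain i where i: "i < s" and not_scalar:
      "\<not> (\<exists>c. \<forall>a<rs i. \<forall>b<rs i. coef q i a b = (if a = b then c else 0))"
    using central_if_coef_scalar[OF q(1)] \<open>q \<notin> center F\<close> by blast
  define \<beta> where "\<beta> = 1 / (4 * real (rs i))"
  consider (off_diagonal) a b where "a < rs i" "b < rs i" "a \<noteq> b" "\<beta> \<le> cmod (coef q i a b)"
    | (diagonal) a b where "a < rs i" "b < rs i" "\<beta> \<le> cmod (coef q i a a - coef q i b b)"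
  proof -
    have "\<not> (\<forall>a<rs i. \<forall>b<rs i. a \<noteq> b \<longrightarrow> cmod (coef q i a b) < \<beta>)
        \<or> \<not> (\<forall>a<rs i. \<forall>b<rs i. cmod (coef q i a a - coef q i b b) < \<beta>)"
      using proj_matrix_scalar_if_nearly_diagonal[OF coef_proj_matrix[OF q i], folded \<beta>_def] not_scalar
      by blast
    then show thesis
      using that by (auto simp: not_less)
  qed
  then show ?thesis
  proof cases
    case off_diagonal
    have "cmod (coef q i a b) \<le> opnorm (commutator (f i a a) q)"
      by (rule compression_scalar_le_opnorm[OF i off_diagonal(1,2)
            compression_commutator_diagonal_unit[OF q(1) i off_diagonal(1-3)]])
    then have "\<beta> \<le> opnorm (commutator (f i a a) q)"
      using off_diagonal(4) by linarith
    then show ?thesis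
      using i off_diagonal unfolding \<beta>_def by blast
  next
    case diagonal
    have "cmod (coef q i a a - coef q i b b) \<le> opnorm (commutator (f i b a) q)"
      by (rule compression_scalar_le_opnorm[OF i diagonal(2,1)
            compression_commutator_unit[OF q(1) i diagonal(2,1)]])
    then have "\<beta> \<le> opnorm (commutator (f i b a) q)"
      using diagonal(3) by linarith
    then show ?thesis
      using i diagonal unfolding \<beta>_def by blast
  qed
qed

end

theorem proposition3p5:
  "\<exists>\<alpha>>0. \<forall>(F :: ('n::finite) cmat set) k e q.
     k \<le> CARD('n)\<^sup>2 \<and> cstar_subalg F \<and> cdim F = k \<and> matrix_units F k e \<and>
     q \<in> F \<and> is_projection q \<longrightarrow>
     q \<in> center F \<or> (\<exists>m\<in>{1..k}. opnorm (commutator (e m) q) \<ge> \<alpha>)"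
proof (intro exI[of _ "1 / (4 * real CARD('n))"] conjI allI impI)
  fix F :: "'n cmat set" and k e q
  assume "k \<le> CARD('n)\<^sup>2 \<and> cstar_subalg F \<and> cdim F = k \<and> matrix_units F k e \<and>
    q \<in> F \<and> is_projection q"
  then have k: "k \<le> CARD('n)\<^sup>2" and q: "q \<in> F" "is_projection q" and "matrix_units F k e"
    by auto
  then obtain s rs f where "matrix_unit_family F s rs f" and k_sum: "k = (\<Sum>i<s. (rs i)\<^sup>2)"
    and e_range: "e ` {1..k} = {f i l m | i l m. i < s \<and> l < rs i \<and> m < rs i}"
    unfolding matrix_units_def by blast
  then interpret matrix_unit_system F s rs f
    by unfold_locales
  show "q \<in> center F \<or> (\<exists>m\<in>{1..k}. 1 / (4 * real CARD('n)) \<le> opnorm (commutator (e m) q))"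
  proof (cases "q \<in> center F")
    case False
    then obtain i l m where ilm: "i < s" "l < rs i" "m < rs i"
      and bound: "1 / (4 * real (rs i)) \<le> opnorm (commutator (f i l m) q)"
      using noncentral_projection_commutator_bound[OF q] by blast
    have "(rs i)\<^sup>2 \<le> k"
      unfolding k_sum using ilm(1) by (intro member_le_sum) auto
    then have "rs i \<le> CARD('n)"
      using k power2_le_imp_le[of "rs i" "CARD('n)"] by linarith
    then have "1 / (4 * real CARD('n)) \<le> 1 / (4 * real (rs i))"
      using ilm(2) by (simp add: frac_le)
    then have "1 / (4 * real CARD('n)) \<le> opnorm (commutator (f i l m) q)"
      using bound by linarith
    moreover have "f i l m \<in> e ` {1..k}"
      unfolding e_range using ilm by blast
    ultimately show ?thesis
      by (metis imageE)
  qed simp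
qed simp

end
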